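(* Let $A=(a_{ij})_{1\le i,j\le n}$ be a complex matrix such that $A^T$ is a Nekrasov matrix. Let $\bar k$ be the smallest index such that $a_{j\bar k}=0$ for all $j>\bar k$, and let $\bar\epsilon_1,\dots,\bar\epsilon_n$ be real numbers with $\bar\epsilon_i=0$ for $i<\bar k$ and, for $i=\bar k,\dots,n$, $0<\bar\epsilon_i<|a_{ii}|-h_i(A^T)$ and $\bar\epsilon_i>\sum_{j=\bar k}^{i-1}\frac{|a_{ji}|\bar\epsilon_j}{|a_{jj}|}$. Define $\bar w_i:=\sum_{j=1}^{i-1}|a_{ji}|\frac{\bar\epsilon_j}{|a_{jj}|}$ and $\bar p_i:=\sum_{j=i+1}^{n}|a_{ji}|\frac{|a_{jj}|-h_j(A^T)-\bar\epsilon_j}{|a_{jj}|}$. Then $$\|A^{-1}\|_1\le \frac{\max_{i\in N}\frac{h_i(A^T)+\bar\epsilon_i}{|a_{ii}|}}{\min_{i\in N}(\bar\epsilon_i-\bar w_i+\bar p_i)}.$$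
   Context: For a complex $n\times n$ matrix $B=(b_{ij})$ with $b_{ii}\ne 0$ for all $i$, define recursively $h_1(B):=\sum_{j\ne 1}|b_{1j}|$ and $h_i(B):=\sum_{j=1}^{i-1}|b_{ij}|\frac{h_j(B)}{|b_{jj}|}+\sum_{j=i+1}^{n}|b_{ij}|$ for $i=2,\dots,n$. $B$ is a Nekrasov matrix if $|b_{ii}|>h_i(B)$ for all $i\in N=\{1,\dots,n\}$. $\|\cdot\|_1$ is the maximum absolute column sum norm. *)

theory Defs
  imports "Jordan_Normal_Form.Matrix" Complex_Main
begin

text \<open>Indices are 0-based: row/column i of the paper corresponds to i-1 here.
  h_i(B) from the paper, computed recursively (n = dim_row B).\<close>

function nek_h :: "complex mat \<Rightarrow> nat \<Rightarrow> real" where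
  "nek_h B i =
     (\<Sum>j<i. cmod (B $$ (i,j)) * nek_h B j / cmod (B $$ (j,j)))
     + (\<Sum>j\<in>{i+1..<dim_row B}. cmod (B $$ (i,j)))"
  by pat_completeness auto
termination by (relation "measure snd") auto

definition nekrasov :: "complex mat \<Rightarrow> bool" where
  "nekrasov B \<longleftrightarrow> dim_row B = dim_col B \<and>
     (\<forall>i<dim_row B. B $$ (i,i) \<noteq> 0) \<and>
     (\<forall>i<dim_row B. cmod (B $$ (i,i)) > nek_h B i)"

definition norm1 :: "complex mat \<Rightarrow> real" where
  "norm1 M = Max ((\<lambda>j. \<Sum>i<dim_row M. cmod (M $$ (i,j))) ` {..<dim_col M})"

end

theory Submission imports Defs "Jordan_Normal_Form.Determinant" begin

text \<open>With the weights \<open>d\<^sub>i = (h\<^sub>i(A\<^sup>T) + \<epsilon>\<^sub>i) / |a\<^sub>i\<^sub>i|\<close> the matrix \<open>A\<close> is weighted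
  column diagonally dominant: the excess \<open>d\<^sub>i |a\<^sub>i\<^sub>i| - \<Sum>\<^sub>j\<^sub>\<noteq>\<^sub>i d\<^sub>j |a\<^sub>j\<^sub>i|\<close> of column \<open>i\<close>
  is exactly \<open>\<epsilon>\<^sub>i - w\<^sub>i + p\<^sub>i\<close>, by the recursion defining \<open>h(A\<^sup>T)\<close>. This excess is positive:
  for \<open>i \<ge> k\<close> because \<open>\<epsilon>\<^sub>i > w\<^sub>i\<close>, and for \<open>i < k\<close> because then \<open>\<epsilon>\<^sub>i = w\<^sub>i = 0\<close> while column
  \<open>i\<close> has a nonzero entry below the diagonal, making \<open>p\<^sub>i > 0\<close>. Summing the reverse triangle
  inequality over the rows of \<open>Ax\<close> weighted by \<open>d\<close> gives
  \<open>min\<^sub>i excess\<^sub>i \<cdot> \<parallel>x\<parallel>\<^sub>1 \<le> \<Sum>\<^sub>j d\<^sub>j |(Ax)\<^sub>j|\<close>; hence \<open>A\<close> is injective, and applied to the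
  columns \<open>x = A\<^sup>-\<^sup>1e\<^sub>c\<close> it yields the bound on \<open>\<parallel>A\<^sup>-\<^sup>1\<parallel>\<^sub>1\<close>.\<close>

lemma invertible_mat_if_trivial_kernel:
  fixes A :: "'a :: field mat"
  assumes A: "A \<in> carrier_mat n n"
    and ker: "\<And>v. v \<in> carrier_vec n \<Longrightarrow> A *\<^sub>v v = 0\<^sub>v n \<Longrightarrow> v = 0\<^sub>v n"
  shows "invertible_mat A"
proof -
  have "det A \<noteq> 0" using det_0_iff_vec_prod_zero[OF A] ker by blast
  from det_non_zero_imp_unit[OF A this, of undefined]
  obtain B where "B \<in> carrier_mat n n" "B * A = 1\<^sub>m n" "A * B = 1\<^sub>m n"
    unfolding Units_def ring_mat_def by auto
  with A show ?thesis
    unfolding invertible_mat_def inverts_mat_def square_mat.simps by auto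
qed

lemma index_mult_mat_vec_sum:
  assumes "A \<in> carrier_mat n m" "x \<in> carrier_vec m" "j < n"
  shows "(A *\<^sub>v x) $ j = (\<Sum>i<m. A $$ (j,i) * x $ i)"
  using assms by (simp add: scalar_prod_def lessThan_atLeast0)

lemma norm_sum_ge_diff:
  fixes f :: "'b \<Rightarrow> 'a :: real_normed_vector"
  assumes "finite I" "j \<in> I"
  shows "norm (f j) - (\<Sum>i\<in>I - {j}. norm (f i)) \<le> norm (sum f I)"
proof -
  have "norm (f j) - norm (sum f (I - {j})) \<le> norm (f j + sum f (I - {j}))"
    using norm_diff_ineq by blast
  moreover have "norm (sum f (I - {j})) \<le> (\<Sum>i\<in>I - {j}. norm (f i))"
    by (rule norm_sum)
  ultimately show ?thesis
    using sum.remove[OF assms, of f] by simp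
qed

definition col_excess :: "complex mat \<Rightarrow> (nat \<Rightarrow> real) \<Rightarrow> nat \<Rightarrow> real" where
  "col_excess A d i =
     d i * cmod (A $$ (i,i)) - (\<Sum>j\<in>{..<dim_row A} - {i}. d j * cmod (A $$ (j,i)))"

lemma sum_col_excess_le:
  assumes A: "A \<in> carrier_mat n n" and x: "x \<in> carrier_vec n" and d: "\<forall>j<n. 0 \<le> d j"
  shows "(\<Sum>i<n. col_excess A d i * cmod (x $ i)) \<le> (\<Sum>j<n. d j * cmod ((A *\<^sub>v x) $ j))"
proof -
  let ?off = "\<lambda>j i. d j * cmod (A $$ (j,i)) * cmod (x $ i)"
  have row: "d j * cmod (A $$ (j,j)) * cmod (x $ j) - (\<Sum>i\<in>{..<n} - {j}. ?off j i)
      \<le> d j * cmod ((A *\<^sub>v x) $ j)" if j: "j < n" for j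
  proof -
    have "cmod (A $$ (j,j) * x $ j) - (\<Sum>i\<in>{..<n} - {j}. cmod (A $$ (j,i) * x $ i))
        \<le> cmod ((A *\<^sub>v x) $ j)"
      using norm_sum_ge_diff[of "{..<n}" j "\<lambda>i. A $$ (j,i) * x $ i"] j
      by (simp add: index_mult_mat_vec_sum[OF A x j])
    from mult_left_mono[OF this] d j show ?thesis
      by (simp add: norm_mult right_diff_distrib sum_distrib_left mult.assoc)
  qed
  have swap: "(\<Sum>j<n. \<Sum>i\<in>{..<n} - {j}. ?off j i) = (\<Sum>i<n. \<Sum>j\<in>{..<n} - {i}. ?off j i)"
    using sum.swap_restrict[of "{..<n}" "{..<n}" ?off "\<lambda>j i. i \<noteq> j"]
    by (simp add: set_diff_eq conj_commute eq_commute)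
  have "(\<Sum>i<n. col_excess A d i * cmod (x $ i))
      = (\<Sum>j<n. d j * cmod (A $$ (j,j)) * cmod (x $ j) - (\<Sum>i\<in>{..<n} - {j}. ?off j i))"
    using A by (simp add: col_excess_def swap sum_subtractf left_diff_distrib sum_distrib_right)
  also have "\<dots> \<le> (\<Sum>j<n. d j * cmod ((A *\<^sub>v x) $ j))"
    using row by (intro sum_mono) simp
  finally show ?thesis .
qed

lemma invertible_mat_if_col_excess_pos:
  assumes A: "A \<in> carrier_mat n n" and d: "\<forall>j<n. 0 \<le> d j"
    and pos: "\<forall>i<n. 0 < col_excess A d i"
  shows "invertible_mat A"
proof (rule invertible_mat_if_trivial_kernel[OF A], rule ccontr)
  fix v :: "complex vec"
  assume v: "v \<in> carrier_vec n" and Av: "A *\<^sub>v v = 0\<^sub>v n" and "v \<noteq> 0\<^sub>v n"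
  then obtain i where i: "i < n" "v $ i \<noteq> 0" by (auto simp: vec_eq_iff)
  have "0 < (\<Sum>i<n. col_excess A d i * cmod (v $ i))"
    using i pos by (intro sum_pos2[of _ i]) (auto intro: less_imp_le)
  also have "\<dots> \<le> (\<Sum>j<n. d j * cmod ((A *\<^sub>v v) $ j))"
    using sum_col_excess_le[OF A v d] .
  also have "\<dots> = 0"
    using Av by (intro sum.neutral) simp
  finally show False by simp
qed

lemma norm1_inverse_le_col_excess:
  assumes A: "A \<in> carrier_mat n n" and "0 < n" and d: "\<forall>j<n. 0 \<le> d j"
    and pos: "\<forall>i<n. 0 < col_excess A d i"
    and B: "B \<in> carrier_mat n n" "inverts_mat A B"
  shows "norm1 B \<le> Max (d ` {..<n}) / Min (col_excess A d ` {..<n})"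
proof -
  define g where "g = Min (col_excess A d ` {..<n})"
  have "0 < g" using pos \<open>0 < n\<close> unfolding g_def by (subst Min_gr_iff) force+
  have g_le: "g \<le> col_excess A d i" if "i < n" for i using that unfolding g_def by simp
  have AB: "A * B = 1\<^sub>m n" using A B by (simp add: inverts_mat_def)
  have "(\<Sum>i<n. cmod (B $$ (i,c))) \<le> Max (d ` {..<n}) / g" if c: "c < n" for c
  proof -
    have x: "col B c \<in> carrier_vec n" using B by (simp add: carrier_vecI)
    have Ax: "A *\<^sub>v col B c = unit_vec n c"
      using A B c AB by (metis col_mult2 col_one)
    have "g * (\<Sum>i<n. cmod (col B c $ i)) \<le> (\<Sum>i<n. col_excess A d i * cmod (col B c $ i))"
      unfolding sum_distrib_left using g_le by (intro sum_mono mult_right_mono) auto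
    also have "\<dots> \<le> (\<Sum>j<n. d j * cmod ((A *\<^sub>v col B c) $ j))"
      by (rule sum_col_excess_le[OF A x d])
    also have "\<dots> = d c"
      using c by (simp add: Ax unit_vec_def if_distrib cong: if_cong)
    also have "\<dots> \<le> Max (d ` {..<n})" using c by simp
    finally have "g * (\<Sum>i<n. cmod (B $$ (i,c))) \<le> Max (d ` {..<n})"
      using B c by simp
    with \<open>0 < g\<close> show ?thesis by (simp add: pos_le_divide_eq mult.commute)
  qed
  with B \<open>0 < n\<close> show ?thesis
    unfolding norm1_def g_def by (subst Max_le_iff) auto
qed

declare nek_h.simps[simp del]

lemma nek_h_nonneg: "0 \<le> nek_h B i"
proof (induction B i rule: nek_h.induct)
  case (1 B i)
  then show ?case
    by (subst nek_h.simps) (auto intro!: add_nonneg_nonneg sum_nonneg)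
qed

lemma nek_h_transpose_mat:
  assumes A: "A \<in> carrier_mat n n" and i: "i < n"
  shows "nek_h (transpose_mat A) i =
    (\<Sum>j<i. cmod (A $$ (j,i)) * nek_h (transpose_mat A) j / cmod (A $$ (j,j)))
    + (\<Sum>j\<in>{i+1..<n}. cmod (A $$ (j,i)))"
  using A i by (subst nek_h.simps) (auto intro!: arg_cong2[where f = "(+)"] sum.cong)

lemma nekrasov_transpose_matD:
  assumes "A \<in> carrier_mat n n" "nekrasov (transpose_mat A)" "i < n"
  shows "A $$ (i,i) \<noteq> 0" "nek_h (transpose_mat A) i < cmod (A $$ (i,i))"
  using assms unfolding nekrasov_def by auto

definition nek_weight :: "complex mat \<Rightarrow> (nat \<Rightarrow> real) \<Rightarrow> nat \<Rightarrow> real" where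
  "nek_weight A eps i = (nek_h (transpose_mat A) i + eps i) / cmod (A $$ (i,i))"

lemma col_excess_nek_weight:
  assumes A: "A \<in> carrier_mat n n" and diag: "\<forall>j<n. A $$ (j,j) \<noteq> 0" and i: "i < n"
  shows "col_excess A (nek_weight A eps) i = eps i
    - (\<Sum>j<i. cmod (A $$ (j,i)) * eps j / cmod (A $$ (j,j)))
    + (\<Sum>j\<in>{i+1..<n}. cmod (A $$ (j,i)) *
         (cmod (A $$ (j,j)) - nek_h (transpose_mat A) j - eps j) / cmod (A $$ (j,j)))"
proof -
  let ?h = "nek_h (transpose_mat A)" and ?d = "nek_weight A eps"
  have split: "{..<n} - {i} = {..<i} \<union> {i+1..<n}" using i by auto
  have lower: "(\<Sum>j<i. ?d j * cmod (A $$ (j,i))) =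
      (\<Sum>j<i. cmod (A $$ (j,i)) * ?h j / cmod (A $$ (j,j)))
      + (\<Sum>j<i. cmod (A $$ (j,i)) * eps j / cmod (A $$ (j,j)))"
    unfolding sum.distrib[symmetric] nek_weight_def
    by (intro sum.cong) (simp_all add: add_divide_distrib algebra_simps)
  have upper: "(\<Sum>j\<in>{i+1..<n}. ?d j * cmod (A $$ (j,i))) =
      (\<Sum>j\<in>{i+1..<n}. cmod (A $$ (j,i)))
      - (\<Sum>j\<in>{i+1..<n}. cmod (A $$ (j,i)) *
           (cmod (A $$ (j,j)) - ?h j - eps j) / cmod (A $$ (j,j)))"
    unfolding sum_subtractf[symmetric] nek_weight_def
    using diag by (intro sum.cong) (auto simp: field_simps)
  have "(\<Sum>j\<in>{..<n} - {i}. ?d j * cmod (A $$ (j,i))) =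
      (\<Sum>j<i. ?d j * cmod (A $$ (j,i))) + (\<Sum>j\<in>{i+1..<n}. ?d j * cmod (A $$ (j,i)))"
    unfolding split by (rule sum.union_disjoint) auto
  moreover have "?d i * cmod (A $$ (i,i)) = ?h i + eps i"
    using diag i by (simp add: nek_weight_def)
  ultimately show ?thesis
    using A lower upper nek_h_transpose_mat[OF A i] unfolding col_excess_def
    by (simp add: carrier_matD)
qed

lemma col_excess_nek_weight_pos:
  assumes A: "A \<in> carrier_mat n n" and nek: "nekrasov (transpose_mat A)"
    and k: "k = (LEAST k. \<forall>j. k < j \<and> j < n \<longrightarrow> A $$ (j,k) = 0)"
    and eps_low: "\<forall>i<k. eps i = 0"
    and eps_bound: "\<forall>i. k \<le> i \<and> i < n \<longrightarrow>
           0 < eps i \<and> eps i < cmod (A $$ (i,i)) - nek_h (transpose_mat A) i"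
    and eps_dom: "\<forall>i. k \<le> i \<and> i < n \<longrightarrow>
           eps i > (\<Sum>j\<in>{k..<i}. cmod (A $$ (j,i)) * eps j / cmod (A $$ (j,j)))"
    and i: "i < n"
  shows "0 < col_excess A (nek_weight A eps) i"
proof -
  let ?w = "\<lambda>j. cmod (A $$ (j,i)) * eps j / cmod (A $$ (j,j))"
  let ?p = "\<lambda>j. cmod (A $$ (j,i)) *
              (cmod (A $$ (j,j)) - nek_h (transpose_mat A) j - eps j) / cmod (A $$ (j,j))"
  have diag: "\<forall>j<n. A $$ (j,j) \<noteq> 0" using nekrasov_transpose_matD(1)[OF A nek] by blast
  have slack: "0 < cmod (A $$ (j,j)) - nek_h (transpose_mat A) j - eps j" if "j < n" for j
    using nekrasov_transpose_matD(2)[OF A nek that] eps_low eps_bound that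
    by (cases "j < k") auto
  have p_nonneg: "0 \<le> ?p j" if "j < n" for j
    using slack[OF that] by simp
  have "0 < eps i - (\<Sum>j<i. ?w j) + (\<Sum>j\<in>{i+1..<n}. ?p j)"
  proof (cases "k \<le> i")
    case True
    have "{..<i} = {..<k} \<union> {k..<i}" using True by auto
    then have "(\<Sum>j<i. ?w j) = (\<Sum>j<k. ?w j) + (\<Sum>j\<in>{k..<i}. ?w j)"
      by (simp add: sum.union_disjoint ivl_disj_int)
    moreover have "(\<Sum>j<k. ?w j) = 0" using eps_low by simp
    moreover have "0 \<le> (\<Sum>j\<in>{i+1..<n}. ?p j)" using p_nonneg by (intro sum_nonneg) simp
    ultimately show ?thesis using eps_dom True i by auto
  next
    case False
    then have "i < (LEAST k. \<forall>j. k < j \<and> j < n \<longrightarrow> A $$ (j,k) = 0)" using k by simp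
    from not_less_Least[OF this] obtain j where j: "i < j" "j < n" "A $$ (j,i) \<noteq> 0" by auto
    have "0 < ?p j" using j slack[of j] diag by (simp add: divide_pos_pos)
    then have "0 < (\<Sum>j\<in>{i+1..<n}. ?p j)"
      using j p_nonneg by (intro sum_pos2[of _ j]) auto
    moreover have "(\<Sum>j<i. ?w j) = 0" "eps i = 0" using eps_low False by auto
    ultimately show ?thesis by simp
  qed
  then show ?thesis using col_excess_nek_weight[OF A diag i] by simp
qed

theorem corollary4p2:
  fixes A :: "complex mat" and n :: nat and eps :: "nat \<Rightarrow> real" and k :: nat
  assumes "A \<in> carrier_mat n n" and "0 < n"
    and "nekrasov (transpose_mat A)"
    and k_def: "k = (LEAST k. \<forall>j. k < j \<and> j < n \<longrightarrow> A $$ (j,k) = 0)"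
    and "\<forall>i<k. eps i = 0"
    and "\<forall>i. k \<le> i \<and> i < n \<longrightarrow>
           0 < eps i \<and> eps i < cmod (A $$ (i,i)) - nek_h (transpose_mat A) i"
    and "\<forall>i. k \<le> i \<and> i < n \<longrightarrow>
           eps i > (\<Sum>j\<in>{k..<i}. cmod (A $$ (j,i)) * eps j / cmod (A $$ (j,j)))"
  shows "invertible_mat A \<and>
    (\<forall>B. B \<in> carrier_mat n n \<and> inverts_mat A B \<longrightarrow>
      norm1 B \<le>
        Max ((\<lambda>i. (nek_h (transpose_mat A) i + eps i) / cmod (A $$ (i,i))) ` {..<n})
        / Min ((\<lambda>i. eps i
                 - (\<Sum>j<i. cmod (A $$ (j,i)) * eps j / cmod (A $$ (j,j)))
                 + (\<Sum>j\<in>{i+1..<n}. cmod (A $$ (j,i)) *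
                      (cmod (A $$ (j,j)) - nek_h (transpose_mat A) j - eps j)
                      / cmod (A $$ (j,j)))) ` {..<n}))"
proof -
  note A = assms(1) and nek = assms(3)
  have diag: "\<forall>j<n. A $$ (j,j) \<noteq> 0" using nekrasov_transpose_matD(1)[OF A nek] by blast
  have "0 \<le> eps j" if "j < n" for j
    using assms(5,6) that by (cases "j < k") (auto simp: less_imp_le)
  then have weight_nonneg: "\<forall>j<n. 0 \<le> nek_weight A eps j"
    by (simp add: nek_weight_def nek_h_nonneg)
  have pos: "\<forall>i<n. 0 < col_excess A (nek_weight A eps) i"
    using col_excess_nek_weight_pos[OF A nek assms(4-7)] by blast
  have excess: "col_excess A (nek_weight A eps) ` {..<n} = (\<lambda>i. eps i
                 - (\<Sum>j<i. cmod (A $$ (j,i)) * eps j / cmod (A $$ (j,j)))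
                 + (\<Sum>j\<in>{i+1..<n}. cmod (A $$ (j,i)) *
                      (cmod (A $$ (j,j)) - nek_h (transpose_mat A) j - eps j)
                      / cmod (A $$ (j,j)))) ` {..<n}"
    using col_excess_nek_weight[OF A diag] by (intro image_cong) auto
  show ?thesis
    using invertible_mat_if_col_excess_pos[OF A weight_nonneg pos]
      norm1_inverse_le_col_excess[OF A assms(2) weight_nonneg pos]
    unfolding excess nek_weight_def by blast
qed

end
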